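(* Let $\gamma(t)$ be the formula in the language of rings $$\gamma(t):\ \exists f\,\exists g\,\Big[\neg\mathrm{C}(f)\wedge g\neq0\wedge f\mid g\wedge\forall h\Big(\big[\mathrm{C}(h)\wedge (f+h)\mid g\big]\to\big[(f+h+1)\mid g\ \vee\ h=t\big]\Big)\Big],$$ where $\mathrm{C}(t)$ abbreviates "$t=0\vee\exists u\,(tu=1)$" and $a\mid b$ abbreviates $\exists c\,(ac=b)$. Then for every field $R$ of characteristic zero and every nonempty set $\mathcal{X}$ of indeterminates, $\gamma$ defines in $S=R[\mathcal{X}]$ the set $\{n\cdot 1_S: n\in\mathbb{N}\}$ (a copy of the natural numbers $\{0,1,2,\dots\}$). Consequently, arithmetic $(\mathbb{Z},+,\times)$ is uniformly interpretable in the class of polynomial rings over fields of characteristic zero.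
   Context: An interpretation of a structure in another is uniform over a class of structures if all the defining formulas (domain, equality, and the graphs of the operations) are the same for every member of the class. *)

theory Defs
  imports Main "HOL-Library.Poly_Mapping"
begin

text \<open>The polynomial ring R[X] over a coefficient ring 'a in the indeterminates
  given by the (nonempty) type 'v: finitely supported maps from monomials
  (finitely supported exponent vectors) to coefficients.\<close>
type_synonym ('v, 'a) mpoly = "('v \<Rightarrow>\<^sub>0 nat) \<Rightarrow>\<^sub>0 'a"

definition divs :: "'r::comm_ring_1 \<Rightarrow> 'r \<Rightarrow> bool" where
  "divs a b \<longleftrightarrow> (\<exists>c. a * c = b)"

definition C :: "'r::comm_ring_1 \<Rightarrow> bool" where
  "C t \<longleftrightarrow> t = 0 \<or> (\<exists>u. t * u = 1)"

definition gamma :: "'r::comm_ring_1 \<Rightarrow> bool" where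
  "gamma t \<longleftrightarrow> (\<exists>f g. \<not> C f \<and> g \<noteq> 0 \<and> divs f g \<and>
     (\<forall>h. (C h \<and> divs (f + h) g) \<longrightarrow> (divs (f + h + 1) g \<or> h = t)))"

end

theory Submission
  imports Defs
begin

text \<open>
  If \<open>\<gamma>(t)\<close> holds for some \<open>t\<close> that is not a natural number, then induction along the
  defining clause shows that all translates \<open>f + n\<close> of the nonconstant \<open>f\<close> divide
  \<open>g \<noteq> 0\<close>. Any two of them differ by a unit, so their products \<open>(f + 0)\<cdots>(f + N - 1)\<close>
  divide \<open>g\<close> as well, which is impossible for \<open>N\<close> beyond the total degree of \<open>g\<close>.
  Conversely, for \<open>t = n\<close> take \<open>f = x\<close> and \<open>g = x (x + 1) \<cdots> (x + n)\<close> for a variable \<open>x\<close>: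
  a linear factor \<open>x + c\<close> divides \<open>g\<close> only if \<open>c \<in> {0, \<dots>, n}\<close>, because otherwise it
  divides the nonzero constant \<open>(0 - c) \<cdots> (n - c)\<close>.
\<close>

abbreviation const_mpoly :: "'a::zero \<Rightarrow> ('v, 'a) mpoly" where
  "const_mpoly c \<equiv> Poly_Mapping.single 0 c"

definition var_mpoly :: "'v \<Rightarrow> ('v, 'a::{zero,one}) mpoly" where
  "var_mpoly v = Poly_Mapping.single (Poly_Mapping.single v 1) 1"

lemma divs_iff_dvd: "divs a b \<longleftrightarrow> a dvd b"
  by (auto simp: divs_def dvd_def)

lemma lookup_mult_max_weight:
  fixes p q :: "'m::comm_monoid_add \<Rightarrow>\<^sub>0 'b::idom"
    and W :: "'m \<Rightarrow> 'o::{ordered_cancel_comm_monoid_add, linorder}"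
  assumes W_add: "\<And>x y. W (x + y) = W x + W y"
    and inj_p: "inj_on W (Poly_Mapping.keys p)" and inj_q: "inj_on W (Poly_Mapping.keys q)"
    and a: "a \<in> Poly_Mapping.keys p" "\<And>m. m \<in> Poly_Mapping.keys p \<Longrightarrow> W m \<le> W a"
    and b: "b \<in> Poly_Mapping.keys q" "\<And>m. m \<in> Poly_Mapping.keys q \<Longrightarrow> W m \<le> W b"
  shows "Poly_Mapping.lookup (p * q) (a + b) = Poly_Mapping.lookup p a * Poly_Mapping.lookup q b"
proof -
  have unique: "x = a \<and> y = b"
    if x: "x \<in> Poly_Mapping.keys p" and y: "y \<in> Poly_Mapping.keys q" and xy: "x + y = a + b" for x y
  proof -
    have "W x + W y = W a + W b" using W_add xy by metis
    moreover have "W x \<le> W a" "W y \<le> W b" using a b x y by auto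
    ultimately have "W x = W a" "W y = W b"
      by (metis add_less_le_mono add_le_less_mono order.not_eq_order_implies_strict less_irrefl)+
    then show ?thesis using inj_p inj_q x y a(1) b(1) by (auto dest: inj_onD)
  qed
  have "Poly_Mapping.lookup (p * q) (a + b) =
      (\<Sum>(x, y). Poly_Mapping.lookup p x * Poly_Mapping.lookup q y when a + b = x + y)"
    by (simp add: times_poly_mapping.rep_eq prod_fun_unfold_prod)
  also have "\<dots> = (\<Sum>xy. (case xy of (x, y) \<Rightarrow> Poly_Mapping.lookup p x * Poly_Mapping.lookup q y)
      when (a, b) = xy)"
    by (rule Sum_any.cong) (use unique in \<open>fastforce simp: when_def in_keys_iff\<close>)
  also have "\<dots> = Poly_Mapping.lookup p a * Poly_Mapping.lookup q b"
    by simp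
  finally show ?thesis .
qed

definition monomial_degree :: "('v \<Rightarrow>\<^sub>0 nat) \<Rightarrow> nat" where
  "monomial_degree m = (\<Sum>v\<in>Poly_Mapping.keys m. Poly_Mapping.lookup m v)"

lemma monomial_degree_add: "monomial_degree (m + m') = monomial_degree m + monomial_degree m'"
  unfolding monomial_degree_def by (rule setsum_keys_plus_distrib) auto

lemma monomial_degree_eq_0_iff: "monomial_degree m = 0 \<longleftrightarrow> m = 0"
  unfolding monomial_degree_def by (auto simp: in_keys_iff poly_mapping_eq_iff fun_eq_iff)

definition total_degree :: "('v, 'a::zero) mpoly \<Rightarrow> nat" where
  "total_degree p = Max (monomial_degree ` Poly_Mapping.keys p)"

text \<open>
  A monomial order refining the total degree, realised on the finitely many variables in
  \<open>V\<close> by the lexicographic order of \<open>(deg m, m(v\<^sub>0), \<dots>, m(v\<^sub>n\<^sub>-\<^sub>1))\<close>.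
\<close>
lemma degree_refining_weight_exists:
  fixes V :: "'v set"
  assumes "finite V"
  obtains W :: "('v \<Rightarrow>\<^sub>0 nat) \<Rightarrow> (nat \<Rightarrow>\<^sub>0 nat)"
  where "\<And>m m'. W (m + m') = W m + W m'"
    and "inj_on W {m. Poly_Mapping.keys m \<subseteq> V}"
    and "\<And>m m'. monomial_degree m < monomial_degree m' \<Longrightarrow> W m < W m'"
proof -
  obtain n and e :: "nat \<Rightarrow> 'v" where V: "V = e ` {i. i < n}"
    using assms finite_imp_nat_seg_image_inj_on by blast
  define F where "F m i = (if i = 0 then monomial_degree m
    else if i \<le> n then Poly_Mapping.lookup m (e (i - 1)) else 0)" for m i
  define W where "W m = Abs_poly_mapping (F m)" for m
  have lookup_W: "Poly_Mapping.lookup (W m) = F m" for m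
  proof -
    have "finite {i. F m i \<noteq> 0}"
      by (rule finite_subset[of _ "{..n}"]) (auto simp: F_def split: if_splits)
    then show ?thesis unfolding W_def by simp
  qed
  have "W (m + m') = W m + W m'" for m m'
    by (rule poly_mapping_eqI) (simp add: lookup_W lookup_add F_def monomial_degree_add)
  moreover have "inj_on W {m. Poly_Mapping.keys m \<subseteq> V}"
  proof (rule inj_onI, rule poly_mapping_eqI)
    fix m m' v
    assume m: "m \<in> {m. Poly_Mapping.keys m \<subseteq> V}" and m': "m' \<in> {m. Poly_Mapping.keys m \<subseteq> V}"
      and "W m = W m'"
    then have F: "F m i = F m' i" for i by (metis lookup_W)
    show "Poly_Mapping.lookup m v = Poly_Mapping.lookup m' v"
    proof (cases "v \<in> V")
      case True
      then obtain j where "j < n" "v = e j" using V by auto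
      then show ?thesis using F[of "Suc j"] by (simp add: F_def)
    next
      case False
      then have "v \<notin> Poly_Mapping.keys m" "v \<notin> Poly_Mapping.keys m'" using m m' by auto
      then show ?thesis by (simp add: in_keys_iff)
    qed
  qed
  moreover have "W m < W m'" if "monomial_degree m < monomial_degree m'" for m m'
    unfolding less_poly_mapping.rep_eq less_fun_def lookup_W using that
    by (intro exI[of _ 0]) (simp add: F_def)
  ultimately show thesis by (rule that)
qed

lemma max_weight_key_has_total_degree:
  fixes p :: "('v, 'a::zero) mpoly" and W :: "('v \<Rightarrow>\<^sub>0 nat) \<Rightarrow> 'o::linorder"
  assumes W_mono: "\<And>m m'. monomial_degree m < monomial_degree m' \<Longrightarrow> W m < W m'"
    and "p \<noteq> 0"
  obtains a where "a \<in> Poly_Mapping.keys p" "\<And>m. m \<in> Poly_Mapping.keys p \<Longrightarrow> W m \<le> W a"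
    and "monomial_degree a = total_degree p"
proof -
  have "Max (W ` Poly_Mapping.keys p) \<in> W ` Poly_Mapping.keys p"
    using \<open>p \<noteq> 0\<close> by (intro Max_in) auto
  then obtain a where a: "a \<in> Poly_Mapping.keys p" and "Max (W ` Poly_Mapping.keys p) = W a"
    by auto
  then have a_max: "W m \<le> W a" if "m \<in> Poly_Mapping.keys p" for m
    using that by (metis Max_ge finite_imageI finite_keys image_eqI)
  have "monomial_degree a = total_degree p"
    unfolding total_degree_def
    by (rule Max_eqI[symmetric]) (use a a_max W_mono in \<open>auto simp: not_le[symmetric]\<close>)
  with a a_max show thesis by (rule that)
qed

lemma key_of_mult_total_degree_exists:
  fixes p q :: "('v, 'a::idom) mpoly"
  assumes "p \<noteq> 0" "q \<noteq> 0"
  obtains m where "m \<in> Poly_Mapping.keys (p * q)"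
    and "monomial_degree m = total_degree p + total_degree q"
proof -
  define V where "V = (\<Union>m\<in>Poly_Mapping.keys p \<union> Poly_Mapping.keys q. Poly_Mapping.keys m)"
  have "finite V" unfolding V_def by simp
  then obtain W :: "('v \<Rightarrow>\<^sub>0 nat) \<Rightarrow> (nat \<Rightarrow>\<^sub>0 nat)"
    where W_add: "\<And>m m'. W (m + m') = W m + W m'" and W_inj: "inj_on W {m. Poly_Mapping.keys m \<subseteq> V}"
      and W_mono: "\<And>m m'. monomial_degree m < monomial_degree m' \<Longrightarrow> W m < W m'"
    by (metis degree_refining_weight_exists)
  obtain a where a: "a \<in> Poly_Mapping.keys p" "\<And>m. m \<in> Poly_Mapping.keys p \<Longrightarrow> W m \<le> W a"
      and deg_a: "monomial_degree a = total_degree p"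
    using max_weight_key_has_total_degree[where W = W, OF W_mono \<open>p \<noteq> 0\<close>] by blast
  obtain b where b: "b \<in> Poly_Mapping.keys q" "\<And>m. m \<in> Poly_Mapping.keys q \<Longrightarrow> W m \<le> W b"
      and deg_b: "monomial_degree b = total_degree q"
    using max_weight_key_has_total_degree[where W = W, OF W_mono \<open>q \<noteq> 0\<close>] by blast
  have "inj_on W (Poly_Mapping.keys p)" "inj_on W (Poly_Mapping.keys q)"
    by (auto intro!: inj_on_subset[OF W_inj] simp: V_def)
  then have "Poly_Mapping.lookup (p * q) (a + b) = Poly_Mapping.lookup p a * Poly_Mapping.lookup q b"
    using W_add a b by (intro lookup_mult_max_weight)
  also have "\<dots> \<noteq> 0" using a(1) b(1) by (simp add: in_keys_iff)
  finally have "a + b \<in> Poly_Mapping.keys (p * q)" by (simp add: in_keys_iff)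
  moreover have "monomial_degree (a + b) = total_degree p + total_degree q"
    by (simp add: monomial_degree_add deg_a deg_b)
  ultimately show thesis by (rule that)
qed

lemma mult_mpoly_neq_zero:
  fixes p q :: "('v, 'a::idom) mpoly"
  assumes "p \<noteq> 0" "q \<noteq> 0"
  shows "p * q \<noteq> 0"
  using assms by (metis key_of_mult_total_degree_exists keys_zero empty_iff)

lemma total_degree_mult_ge:
  fixes p q :: "('v, 'a::idom) mpoly"
  assumes "p \<noteq> 0" "q \<noteq> 0"
  shows "total_degree p + total_degree q \<le> total_degree (p * q)"
proof -
  obtain m where "m \<in> Poly_Mapping.keys (p * q)"
    and "monomial_degree m = total_degree p + total_degree q"
    using key_of_mult_total_degree_exists[OF assms] .
  then show ?thesis unfolding total_degree_def by (metis Max_ge finite_imageI finite_keys image_eqI)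
qed

lemma total_degree_dvd_le:
  fixes p q :: "('v, 'a::idom) mpoly"
  assumes "p dvd q" "q \<noteq> 0"
  shows "total_degree p \<le> total_degree q"
proof -
  obtain r where q: "q = p * r" using assms(1) by (auto elim: dvdE)
  then have "p \<noteq> 0" "r \<noteq> 0" using assms(2) by auto
  then show ?thesis using total_degree_mult_ge[of p r] q by simp
qed

lemma total_degree_eq_0_imp_const:
  assumes "total_degree p = 0"
  shows "p = const_mpoly (Poly_Mapping.lookup p 0)"
proof (rule poly_mapping_eqI)
  fix m
  have "m = 0" if "m \<in> Poly_Mapping.keys p"
  proof -
    have "monomial_degree m \<le> total_degree p"
      unfolding total_degree_def using that by (intro Max_ge) auto
    then show ?thesis using assms by (simp add: monomial_degree_eq_0_iff)
  qed
  then show "Poly_Mapping.lookup p m = Poly_Mapping.lookup (const_mpoly (Poly_Mapping.lookup p 0)) m"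
    by (auto simp: lookup_single when_def in_keys_iff)
qed

lemma total_degree_pos_if_nonconstant:
  assumes "\<nexists>c. p = const_mpoly c"
  shows "0 < total_degree p"
  using assms total_degree_eq_0_imp_const by (metis gr0I)

lemma total_degree_prod_nonconstant:
  fixes F :: "nat \<Rightarrow> ('v, 'a::idom) mpoly"
  assumes "\<And>k. k < N \<Longrightarrow> \<nexists>c. F k = const_mpoly c"
  shows "(\<Prod>k<N. F k) \<noteq> 0 \<and> N \<le> total_degree (\<Prod>k<N. F k)"
  using assms
proof (induction N)
  case 0 then show ?case by simp
next
  case (Suc N)
  have "F N \<noteq> 0" "0 < total_degree (F N)"
    using Suc.prems[of N] total_degree_pos_if_nonconstant by (metis lessI single_zero)+
  moreover have "(\<Prod>k<N. F k) \<noteq> 0" "N \<le> total_degree (\<Prod>k<N. F k)"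
    using Suc by auto
  ultimately show ?case
    using total_degree_mult_ge[of "\<Prod>k<N. F k" "F N"] by (simp add: mult_mpoly_neq_zero)
qed

lemma is_unit_mpoly_imp_const:
  fixes p :: "('v, 'a::idom) mpoly"
  assumes "p dvd 1"
  shows "\<exists>c. p = const_mpoly c"
proof -
  have "total_degree p \<le> total_degree (1 :: ('v, 'a) mpoly)"
    using assms by (rule total_degree_dvd_le) simp
  also have "\<dots> = 0" by (simp add: total_degree_def monomial_degree_def)
  finally show ?thesis using total_degree_eq_0_imp_const by blast
qed

lemma const_mpoly_dvd_1:
  fixes c :: "'a::field"
  assumes "c \<noteq> 0"
  shows "(const_mpoly c :: ('v, 'a) mpoly) dvd 1"
proof (rule dvdI)
  show "1 = const_mpoly c * const_mpoly (inverse c)"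
    using assms by (simp add: mult_single flip: single_one)
qed

lemma C_mpoly_iff:
  fixes h :: "('v, 'a::field) mpoly"
  shows "C h \<longleftrightarrow> (\<exists>c. h = const_mpoly c)"
proof
  assume "C h"
  then have "h = 0 \<or> h dvd 1" unfolding C_def by (auto intro: dvdI)
  then show "\<exists>c. h = const_mpoly c"
    using is_unit_mpoly_imp_const single_zero by metis
next
  assume "\<exists>c. h = const_mpoly c"
  then obtain c where h: "h = const_mpoly c" by blast
  show "C h"
  proof (cases "c = 0")
    case False
    from const_mpoly_dvd_1[OF this] obtain u where "1 = h * u" unfolding h by (rule dvdE)
    then show ?thesis unfolding C_def by metis
  qed (simp add: C_def h)
qed

lemma dvd_prod_add_diff_prod:
  fixes b :: "'r::comm_ring_1"
  assumes "finite A"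
  shows "b dvd (\<Prod>k\<in>A. b + e k) - (\<Prod>k\<in>A. e k)"
  using assms
proof (induction A rule: finite_induct)
  case empty then show ?case by simp
next
  case (insert a A)
  then obtain r where r: "(\<Prod>k\<in>A. b + e k) - (\<Prod>k\<in>A. e k) = b * r" by (auto elim: dvdE)
  have "(\<Prod>k\<in>insert a A. b + e k) - (\<Prod>k\<in>insert a A. e k)
      = (b + e a) * (\<Prod>k\<in>A. b + e k) - e a * (\<Prod>k\<in>A. e k)" using insert by simp
  also have "\<dots> = b * ((\<Prod>k\<in>A. b + e k) + e a * r)"
    using r by (simp add: algebra_simps)
  finally show ?case by simp
qed

lemma mult_dvd_if_congruent_unit:
  fixes P :: "'r::comm_ring_1"
  assumes "P dvd g" "b dvd g" "b dvd P - c" "c dvd 1"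
  shows "P * b dvd g"
proof -
  obtain q where q: "g = P * q" using assms(1) by (auto elim: dvdE)
  have "b dvd P * q - (P - c) * q" using assms(2,3) q by (simp add: dvd_diff)
  then have "b dvd c * q" by (simp add: algebra_simps)
  moreover obtain c' where "1 = c * c'" using assms(4) by (auto elim: dvdE)
  then have "q = c' * (c * q)" by (metis mult.assoc mult.commute mult_1)
  ultimately have "b dvd q" by (metis dvd_mult)
  then show ?thesis using q by (simp add: mult_dvd_mono)
qed

lemma prod_dvd_1:
  fixes e :: "'b \<Rightarrow> 'r::comm_monoid_mult"
  assumes "\<And>k. k \<in> A \<Longrightarrow> e k dvd 1"
  shows "(\<Prod>k\<in>A. e k) dvd 1"
  using prod_dvd_prod[of A e "\<lambda>_. 1"] assms by simp

text \<open>
  In a ring where the positive integers are invertible, the translates \<open>f + k\<close> are pairwise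
  comaximal, so they divide \<open>g\<close> jointly once they do so one by one.
\<close>
lemma prod_translates_dvd:
  fixes f g :: "'r::comm_ring_1"
  assumes units: "\<And>n. 0 < n \<Longrightarrow> of_nat n dvd (1 :: 'r)"
    and dvd: "\<And>k. (f + of_nat k) dvd g"
  shows "(\<Prod>k<N. f + of_nat k) dvd g"
proof (induction N)
  case 0 then show ?case by simp
next
  case (Suc N)
  have "(f + of_nat N) dvd
      (\<Prod>k<N. (f + of_nat N) + (of_nat k - of_nat N)) - (\<Prod>k<N. of_nat k - of_nat N)"
    by (rule dvd_prod_add_diff_prod) simp
  then have "(f + of_nat N) dvd (\<Prod>k<N. f + of_nat k) - (\<Prod>k<N. of_nat k - of_nat N)"
    by simp
  moreover have "(\<Prod>k<N. of_nat k - of_nat N :: 'r) dvd 1"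
  proof (rule prod_dvd_1)
    fix k assume "k \<in> {..<N}"
    then have "of_nat k - of_nat N = - (of_nat (N - k) :: 'r)" by (simp add: of_nat_diff)
    moreover have "(of_nat (N - k) :: 'r) dvd 1" by (rule units) (use \<open>k \<in> {..<N}\<close> in simp)
    ultimately show "(of_nat k - of_nat N :: 'r) dvd 1" by (simp only: minus_dvd_iff)
  qed
  ultimately show ?case
    using mult_dvd_if_congruent_unit[OF Suc.IH dvd] by simp
qed

lemma of_nat_mpoly_dvd_1:
  assumes "0 < n"
  shows "(of_nat n :: ('v, 'a::field_char_0) mpoly) dvd 1"
  using const_mpoly_dvd_1[of "of_nat n :: 'a"] assms by simp

lemma nonconstant_translates_not_all_dvd:
  fixes f g :: "('v, 'a::field_char_0) mpoly"
  assumes "\<not> C f" "g \<noteq> 0"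
  shows "\<exists>n. \<not> (f + of_nat n) dvd g"
proof (rule ccontr)
  assume "\<not> ?thesis"
  then have "(\<Prod>k<Suc (total_degree g). f + of_nat k) dvd g"
    by (intro prod_translates_dvd of_nat_mpoly_dvd_1) auto
  then have "total_degree (\<Prod>k<Suc (total_degree g). f + of_nat k) \<le> total_degree g"
    using \<open>g \<noteq> 0\<close> by (rule total_degree_dvd_le)
  moreover have nonconstant: "\<nexists>c. f + of_nat k = const_mpoly c" for k
  proof
    assume "\<exists>c. f + of_nat k = const_mpoly c"
    then obtain c where "f = const_mpoly c - const_mpoly (of_nat k)"
      by (metis add_diff_cancel single_of_nat)
    then have "f = const_mpoly (c - of_nat k)" by (simp add: single_diff)
    with \<open>\<not> C f\<close> show False by (auto simp: C_mpoly_iff)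
  qed
  then have "Suc (total_degree g) \<le> total_degree (\<Prod>k<Suc (total_degree g). f + of_nat k)"
    using total_degree_prod_nonconstant[of _ "\<lambda>k. f + of_nat k"] nonconstant by blast
  ultimately show False by simp
qed

lemma var_add_const_nonconstant:
  fixes v :: 'v
  shows "var_mpoly v + const_mpoly c \<noteq> (const_mpoly d :: ('v, 'a::comm_ring_1) mpoly)"
proof
  have "Poly_Mapping.single v (1::nat) \<noteq> 0" by (metis lookup_single_eq lookup_zero one_neq_zero)
  moreover assume "var_mpoly v + const_mpoly c = const_mpoly d"
  then have "Poly_Mapping.lookup (var_mpoly v + const_mpoly c) (Poly_Mapping.single v 1) =
      Poly_Mapping.lookup (const_mpoly d :: ('v, 'a) mpoly) (Poly_Mapping.single v 1)"
    by simp
  ultimately show False by (simp add: var_mpoly_def lookup_add lookup_single)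
qed

lemma var_add_const_dvd_prod_translates:
  fixes v :: 'v and c :: "'a::field_char_0"
  assumes dvd: "(var_mpoly v + const_mpoly c) dvd (\<Prod>k\<le>n. var_mpoly v + of_nat k)"
  shows "\<exists>k\<le>n. c = of_nat k"
proof (rule ccontr)
  assume "\<not> ?thesis"
  then have units: "(of_nat k - const_mpoly c :: ('v, 'a) mpoly) dvd 1" if "k \<le> n" for k
    using that const_mpoly_dvd_1[of "of_nat k - c"] by (auto simp: single_diff)
  have "(var_mpoly v + const_mpoly c) dvd
      (\<Prod>k\<le>n. (var_mpoly v + const_mpoly c) + (of_nat k - const_mpoly c)) - (\<Prod>k\<le>n. of_nat k - const_mpoly c)"
    by (rule dvd_prod_add_diff_prod) simp
  with dvd have "(var_mpoly v + const_mpoly c) dvd (\<Prod>k\<le>n. of_nat k - const_mpoly c)"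
    by (simp add: dvd_diff_right_iff)
  also have "\<dots> dvd 1" using units by (intro prod_dvd_1) simp
  finally have "\<exists>d. var_mpoly v + const_mpoly c = const_mpoly d" by (rule is_unit_mpoly_imp_const)
  then show False using var_add_const_nonconstant[of v c] by blast
qed

lemma gamma_imp_of_nat:
  fixes t :: "('v, 'a::field_char_0) mpoly"
  assumes "gamma t"
  shows "\<exists>n::nat. t = of_nat n"
proof (rule ccontr)
  assume t: "\<nexists>n::nat. t = of_nat n"
  obtain f g where "\<not> C f" "g \<noteq> 0" "f dvd g"
    and step: "\<And>h. C h \<Longrightarrow> (f + h) dvd g \<Longrightarrow> (f + h + 1) dvd g \<or> h = t"
    using assms unfolding gamma_def divs_iff_dvd by blast
  have "(f + of_nat n) dvd g" for n
  proof (induction n)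
    case (Suc n)
    have "C (of_nat n :: ('v, 'a) mpoly)" unfolding C_mpoly_iff by (metis single_of_nat)
    with step Suc.IH t have "(f + of_nat n + 1) dvd g" by metis
    then show ?case by (simp add: algebra_simps)
  qed (simp add: \<open>f dvd g\<close>)
  then show False using nonconstant_translates_not_all_dvd[OF \<open>\<not> C f\<close> \<open>g \<noteq> 0\<close>] by blast
qed

lemma gamma_of_nat: "gamma (of_nat n :: ('v, 'a::field_char_0) mpoly)"
proof -
  define x :: "('v, 'a) mpoly" where "x = var_mpoly undefined"
  define g where "g = (\<Prod>k\<le>n. x + of_nat k)"
  have nonconstant: "\<nexists>c. x + of_nat k = const_mpoly c" for k
    unfolding x_def using var_add_const_nonconstant by (metis single_of_nat)
  have "\<not> C x" using nonconstant[of 0] by (simp add: C_mpoly_iff)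
  moreover have "g \<noteq> 0"
    using total_degree_prod_nonconstant[of "Suc n" "\<lambda>k. x + of_nat k"] nonconstant
    by (simp add: g_def lessThan_Suc_atMost)
  moreover have "x dvd g"
    using dvd_prodI[of "{..n}" 0 "\<lambda>k. x + of_nat k"] by (simp add: g_def)
  moreover have "(x + h + 1) dvd g \<or> h = of_nat n" if "C h" "(x + h) dvd g" for h
  proof -
    obtain c where h: "h = const_mpoly c" using \<open>C h\<close> C_mpoly_iff by blast
    have "\<exists>k\<le>n. c = of_nat k"
      using \<open>(x + h) dvd g\<close> unfolding g_def x_def h by (rule var_add_const_dvd_prod_translates)
    then obtain k where "k \<le> n" "h = of_nat k" using h by auto
    show ?thesis
    proof (cases "k = n")
      case False
      with \<open>k \<le> n\<close> have "(x + of_nat (Suc k)) dvd g"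
        unfolding g_def by (intro dvd_prodI) auto
      then show ?thesis using \<open>h = of_nat k\<close> by (simp add: algebra_simps)
    qed (simp add: \<open>h = of_nat k\<close>)
  qed
  ultimately show ?thesis unfolding gamma_def divs_iff_dvd by blast
qed

theorem theorem3p1:
  fixes t :: "('v, 'a::field_char_0) mpoly"
  shows "gamma t \<longleftrightarrow> (\<exists>n::nat. t = of_nat n)"
  using gamma_imp_of_nat gamma_of_nat by blast

end
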